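(* Let $\Sigma$ be a connected orientable surface with end space $E$, let $x\in E$, and let $H_x\subset E$ be the set of ends locally homeomorphic to $x$. Suppose that $C=\overline{H_x}$ has no isolated points (so $C$ is a Cantor set, invariant under the action of the homeomorphism group of $\Sigma$ on $E$). If $z\in C$ has orbit under the homeomorphism group of $\Sigma$ that is dense in $C$, then this orbit is comeager in $C$. In particular, there is at most one orbit of homeomorphisms of $\Sigma$ in $C$ that is dense in $C$.
   Context: For a connected orientable surface $\Sigma$, $E$ denotes its space of ends and $E^G\subset E$ the ends accumulated by genus; homeomorphisms of $\Sigma$ act on $E$. Two ends $x,x'\in E$ are locally homeomorphic if there are clopen neighborhoods $U\ni x$, $U'\ni x'$ in $E$ and a homeomorphism $(U,U\cap E^G)\to(U',U'\cap E^G)$ sending $x$ to $x'$ (equivalently, some homeomorphism of $\Sigma$ maps $x$ to $x'$). *)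

theory Defs
  imports "HOL-Analysis.Analysis"
begin

text \<open>End spaces are modelled abstractly by Richards' classification: the end space of a
connected orientable surface is a pair (E, EG) where E is a compact, metrizable,
totally disconnected space and EG (ends accumulated by genus) is a closed subset;
every such pair arises, and the action of Homeo(Sigma) on E has image exactly the
group of homeomorphisms of the pair (E, EG).\<close>

definition end_space_pair :: "'a topology \<Rightarrow> 'a set \<Rightarrow> bool" where
  "end_space_pair E EG \<longleftrightarrow>
     compact_space E \<and> metrizable_space E \<and>
     (\<forall>x\<in>topspace E. connected_component_of_set E x = {x}) \<and>
     closedin E EG"

definition clopenin :: "'a topology \<Rightarrow> 'a set \<Rightarrow> bool" where
  "clopenin E U \<longleftrightarrow> openin E U \<and> closedin E U"

definition pair_homeo :: "'a topology \<Rightarrow> 'a set \<Rightarrow> ('a \<Rightarrow> 'a) \<Rightarrow> bool" where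
  "pair_homeo E EG h \<longleftrightarrow> homeomorphic_map E E h \<and> h ` EG = EG"

definition end_orbit :: "'a topology \<Rightarrow> 'a set \<Rightarrow> 'a \<Rightarrow> 'a set" where
  "end_orbit E EG z = {h z | h. pair_homeo E EG h}"

definition loc_homeo :: "'a topology \<Rightarrow> 'a set \<Rightarrow> 'a \<Rightarrow> 'a \<Rightarrow> bool" where
  "loc_homeo E EG x x' \<longleftrightarrow>
     (\<exists>U U' f. clopenin E U \<and> clopenin E U' \<and> x \<in> U \<and> x' \<in> U' \<and>
        homeomorphic_map (subtopology E U) (subtopology E U') f \<and>
        f ` (U \<inter> EG) = U' \<inter> EG \<and> f x = x')"

definition H_set :: "'a topology \<Rightarrow> 'a set \<Rightarrow> 'a \<Rightarrow> 'a set" where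
  "H_set E EG x = {x' \<in> topspace E. loc_homeo E EG x x'}"

definition comeager_in :: "'a topology \<Rightarrow> 'a set \<Rightarrow> bool" where
  "comeager_in X S \<longleftrightarrow>
     (\<exists>D :: nat \<Rightarrow> 'a set. (\<forall>n. openin X (D n) \<and> X closure_of (D n) = topspace X) \<and>
        (\<Inter>n. D n) \<subseteq> S)"

end

(*
  Fix an enumeration of the countably many clopen subsets of E. A homeomorphism of the pair
  (E, EG) sending z to y is built in stages: nested clopen sets V k around z and W k around y, not
  split by the first k enumerated clopen sets (so they shrink to the points), together with
  homeomorphisms of pairs V k -> W k mapping V (k+1) onto W (k+1); gluing these maps on the annuli
  V k - V (k+1) gives the homeomorphism. For a fixed stage, the points y at which it can be refined
  form an open set, dense in C because the orbit of z is dense in C and every homeomorphism between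
  clopen subsets agrees at any given point with a global one (swap a small clopen set with its
  image). Hence the orbit contains a countable intersection of dense open subsets of C. In the
  compact space C two such sets meet by the Baire category theorem, so two dense orbits coincide.
*)
theory Submission
  imports Defs
begin

section \<open>Clopen sets and zero-dimensional spaces\<close>

lemma clopenin_imp_subset: "clopenin X U \<Longrightarrow> U \<subseteq> topspace X"
  unfolding clopenin_def by (simp add: openin_subset)

lemma clopenin_topspace [simp]: "clopenin X (topspace X)"
  unfolding clopenin_def by simp

lemma clopenin_Int: "clopenin X A \<Longrightarrow> clopenin X B \<Longrightarrow> clopenin X (A \<inter> B)"
  unfolding clopenin_def by auto

lemma clopenin_diff: "clopenin X A \<Longrightarrow> clopenin X B \<Longrightarrow> clopenin X (A - B)"
  unfolding clopenin_def by (auto intro: openin_diff closedin_diff)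

lemma openin_continuous_map_preimage_subtopology:
  assumes "continuous_map (subtopology X S) Y f" "openin X S" "openin Y U"
  shows "openin X {p \<in> S. f p \<in> U}"
proof -
  have "topspace (subtopology X S) = S" using openin_subset[OF assms(2)] by auto
  then have "openin (subtopology X S) {p \<in> S. f p \<in> U}"
    using openin_continuous_map_preimage[OF assms(1,3)] by simp
  then show ?thesis using assms(2) by (rule openin_trans_full)
qed

lemma closedin_continuous_map_preimage_subtopology:
  assumes "continuous_map (subtopology X S) Y f" "closedin X S" "closedin Y U"
  shows "closedin X {p \<in> S. f p \<in> U}"
proof -
  have "topspace (subtopology X S) = S" using closedin_subset[OF assms(2)] by auto
  then have "closedin (subtopology X S) {p \<in> S. f p \<in> U}"
    using closedin_continuous_map_preimage[OF assms(1,3)] by simp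
  then show ?thesis using assms(2) by (rule closedin_trans_full)
qed

lemma clopenin_continuous_map_preimage:
  assumes "continuous_map (subtopology X U) X f" "clopenin X U" "clopenin X K"
  shows "clopenin X {p \<in> U. f p \<in> K}"
  using assms openin_continuous_map_preimage_subtopology closedin_continuous_map_preimage_subtopology
  unfolding clopenin_def by blast

definition zero_dimensional :: "'a topology \<Rightarrow> bool"
  where "zero_dimensional X \<longleftrightarrow>
    (\<forall>N p. openin X N \<and> p \<in> N \<longrightarrow> (\<exists>U. clopenin X U \<and> p \<in> U \<and> U \<subseteq> N))"

lemma zero_dimensionalD:
  assumes "zero_dimensional X" "openin X N" "p \<in> N"
  obtains U where "clopenin X U" "p \<in> U" "U \<subseteq> N"
  using assms unfolding zero_dimensional_def by blast

lemma compact_totally_disconnected_imp_zero_dimensional: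
  assumes "compact_space X" "Hausdorff_space X"
    and components: "\<And>p. p \<in> topspace X \<Longrightarrow> connected_component_of_set X p = {p}"
  shows "zero_dimensional X"
  unfolding zero_dimensional_def
proof (intro allI impI, elim conjE)
  fix N p assume "openin X N" "p \<in> N"
  then have p: "p \<in> topspace X" using openin_subset by blast
  have "quasi_component_of_set X p = {p}"
    using quasi_eq_connected_component_of assms(1,2) components[OF p] by metis
  moreover have "compactin X (topspace X - N)"
    using assms(1) \<open>openin X N\<close> by (simp add: closedin_compact_space closedin_diff)
  ultimately have "separated_between X {p} (topspace X - N)"
    using separated_between_quasi_component_compact quasi_component_in_quasi_components_of[of X p] p \<open>p \<in> N\<close>
    by (metis Diff_iff disjnt_iff singletonD)
  then obtain U V where UV: "openin X U" "openin X V" "U \<union> V = topspace X" "disjnt U V"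
      "p \<in> U" "topspace X - N \<subseteq> V"
    unfolding separated_between_def by auto
  then have "U = topspace X - V" by (auto simp: disjnt_iff)
  then have "clopenin X U" using UV(1,2) unfolding clopenin_def by (simp add: closedin_diff)
  moreover have "U \<subseteq> N" using UV by (auto simp: disjnt_iff)
  ultimately show "\<exists>U. clopenin X U \<and> p \<in> U \<and> U \<subseteq> N" using UV(5) by blast
qed

lemma compact_metrizable_imp_second_countable:
  assumes "compact_space X" "metrizable_space X"
  shows "second_countable X"
proof -
  obtain M d where "Metric_space M d" and X: "X = Metric_space.mtopology M d"
    using assms(2) unfolding metrizable_space_def by auto
  interpret Metric_space M d by fact
  have "mtotally_bounded M"
    using assms(1) X by (simp add: compactin_imp_mtotally_bounded compact_space_def)
  then have "\<forall>n::nat. \<exists>K. finite K \<and> K \<subseteq> M \<and> M \<subseteq> (\<Union>c\<in>K. mball c (1 / Suc n))"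
    unfolding mtotally_bounded_def by simp
  then obtain K where K: "\<And>n. finite (K n)" "\<And>n. K n \<subseteq> M" "\<And>n. M \<subseteq> (\<Union>c\<in>K n. mball c (1 / Suc n))"
    by metis
  define \<B> where "\<B> = (\<Union>n. (\<lambda>c. mball c (1 / Suc n)) ` K n)"
  have "countable \<B>" unfolding \<B>_def using K(1) by (simp add: countable_finite)
  moreover have "\<forall>B\<in>\<B>. openin X B" unfolding \<B>_def X by auto
  moreover have "\<exists>B\<in>\<B>. x \<in> B \<and> B \<subseteq> U" if "openin X U" "x \<in> U" for U x
  proof -
    have x: "x \<in> M" and "\<exists>r>0. mball x r \<subseteq> U"
      using that X openin_mtopology by auto
    then obtain r where "r > 0" "mball x r \<subseteq> U" by blast
    then obtain n :: nat where "inverse (Suc n) < r / 2"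
      using reals_Archimedean[of "r / 2"] by auto
    then have n: "2 / Suc n < r" by (simp add: field_simps)
    obtain c where c: "c \<in> K n" "x \<in> mball c (1 / Suc n)" using K(3) x by blast
    have "mball c (1 / Suc n) \<subseteq> mball x r"
      using mball_subset[of c x "1 / Suc n" r] c K(2) x n commute by auto
    then show ?thesis using c \<open>mball x r \<subseteq> U\<close> unfolding \<B>_def by blast
  qed
  ultimately show ?thesis unfolding second_countable_def by blast
qed

lemma countable_clopenin:
  assumes "compact_space X" "second_countable X"
  shows "countable {U. clopenin X U}"
proof -
  obtain \<B> where \<B>: "countable \<B>" "\<forall>V\<in>\<B>. openin X V"
    "\<And>U x. openin X U \<Longrightarrow> x \<in> U \<Longrightarrow> \<exists>V\<in>\<B>. x \<in> V \<and> V \<subseteq> U"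
    using assms(2) unfolding second_countable_def by metis
  have "{U. clopenin X U} \<subseteq> Union ` {\<G>. finite \<G> \<and> \<G> \<subseteq> \<B>}"
  proof
    fix U assume "U \<in> {U. clopenin X U}"
    then have U: "openin X U" "compactin X U"
      using assms(1) closedin_compact_space unfolding clopenin_def by auto
    have "U \<subseteq> \<Union>{V\<in>\<B>. V \<subseteq> U}" using \<B>(3) U(1) by blast
    moreover have "\<forall>V\<in>{V\<in>\<B>. V \<subseteq> U}. openin X V" using \<B>(2) by blast
    ultimately obtain \<G> where "finite \<G>" "\<G> \<subseteq> {V\<in>\<B>. V \<subseteq> U}" "U \<subseteq> \<Union>\<G>"
      using U(2) unfolding compactin_def by meson
    then show "U \<in> Union ` {\<G>. finite \<G> \<and> \<G> \<subseteq> \<B>}" by blast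
  qed
  moreover have "countable (Union ` {\<G>. finite \<G> \<and> \<G> \<subseteq> \<B>})"
    using \<B>(1) by (simp add: countable_Collect_finite_subset)
  ultimately show ?thesis by (rule countable_subset)
qed

section \<open>Homeomorphisms between clopen subsets of the pair (E, EG)\<close>

lemma image_image_cancel:
  assumes "\<And>p. p \<in> A \<Longrightarrow> g (f p) = p" shows "g ` f ` A = A"
proof
  show "A \<subseteq> g ` f ` A" using assms by (metis imageI subsetI)
qed (use assms in auto)

definition local_pair_homeo :: "'a topology \<Rightarrow> 'a set \<Rightarrow> 'a set \<Rightarrow> 'a set \<Rightarrow> ('a \<Rightarrow> 'a) \<Rightarrow> bool"
  where "local_pair_homeo E EG U U' f \<longleftrightarrow> clopenin E U \<and> clopenin E U' \<and>
     homeomorphic_map (subtopology E U) (subtopology E U') f \<and> f ` (U \<inter> EG) = U' \<inter> EG"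

lemma local_pair_homeo_clopenin:
  "local_pair_homeo E EG U U' f \<Longrightarrow> clopenin E U"
  "local_pair_homeo E EG U U' f \<Longrightarrow> clopenin E U'"
  unfolding local_pair_homeo_def by auto

lemma local_pair_homeo_topspace:
  assumes "local_pair_homeo E EG U U' f"
  shows "topspace (subtopology E U) = U" "topspace (subtopology E U') = U'"
  using assms clopenin_imp_subset unfolding local_pair_homeo_def by auto

lemma local_pair_homeo_homeomorphic_map:
  "local_pair_homeo E EG U U' f \<Longrightarrow> homeomorphic_map (subtopology E U) (subtopology E U') f"
  unfolding local_pair_homeo_def by simp

lemma local_pair_homeo_image:
  assumes "local_pair_homeo E EG U U' f" shows "f ` U = U'"
  using homeomorphic_imp_surjective_map[OF local_pair_homeo_homeomorphic_map[OF assms]]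
  by (simp only: local_pair_homeo_topspace[OF assms])

lemma local_pair_homeo_inj:
  assumes "local_pair_homeo E EG U U' f" shows "inj_on f U"
  using homeomorphic_imp_injective_map[OF local_pair_homeo_homeomorphic_map[OF assms]]
  by (simp only: local_pair_homeo_topspace[OF assms])

lemma local_pair_homeo_continuous:
  assumes "local_pair_homeo E EG U U' f" shows "continuous_map (subtopology E U) E f"
  using homeomorphic_imp_continuous_map[OF local_pair_homeo_homeomorphic_map[OF assms]]
  by (rule continuous_map_into_fulltopology)

lemma local_pair_homeo_mem_EG_iff:
  assumes f: "local_pair_homeo E EG U U' f" and "p \<in> U"
  shows "f p \<in> EG \<longleftrightarrow> p \<in> EG"
proof
  assume "f p \<in> EG"
  then have "f p \<in> f ` (U \<inter> EG)"
    using f \<open>p \<in> U\<close> local_pair_homeo_image[OF f] unfolding local_pair_homeo_def by auto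
  then obtain p' where "p' \<in> U \<inter> EG" "f p = f p'" by blast
  then show "p \<in> EG"
    using inj_onD[OF local_pair_homeo_inj[OF f]] \<open>p \<in> U\<close> by fastforce
next
  assume "p \<in> EG"
  then have "f p \<in> f ` (U \<inter> EG)" using \<open>p \<in> U\<close> by blast
  then show "f p \<in> EG" using f unfolding local_pair_homeo_def by simp
qed

lemma local_pair_homeo_inverse:
  assumes f: "local_pair_homeo E EG U U' f"
  obtains g where "local_pair_homeo E EG U' U g"
    "\<And>p. p \<in> U \<Longrightarrow> g (f p) = p" "\<And>q. q \<in> U' \<Longrightarrow> f (g q) = q"
proof -
  obtain g where g: "homeomorphic_maps (subtopology E U) (subtopology E U') f g"
    using f unfolding local_pair_homeo_def homeomorphic_map_maps by blast
  then have gf: "\<And>p. p \<in> U \<Longrightarrow> g (f p) = p" and fg: "\<And>q. q \<in> U' \<Longrightarrow> f (g q) = q"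
    using local_pair_homeo_topspace[OF f] unfolding homeomorphic_maps_def by auto
  have "g ` (U' \<inter> EG) = g ` f ` (U \<inter> EG)"
    using f unfolding local_pair_homeo_def by simp
  also have "\<dots> = U \<inter> EG" by (rule image_image_cancel) (use gf in blast)
  moreover have "homeomorphic_map (subtopology E U') (subtopology E U) g"
    using g homeomorphic_maps_sym homeomorphic_maps_imp_map by metis
  ultimately have "local_pair_homeo E EG U' U g"
    using f unfolding local_pair_homeo_def by simp
  with gf fg that show ?thesis by blast
qed

lemma local_pair_homeo_restrict:
  assumes f: "local_pair_homeo E EG U U' f" and "clopenin E V" "V \<subseteq> U"
  shows "local_pair_homeo E EG V (f ` V) f"
proof -
  obtain g where g: "local_pair_homeo E EG U' U g"
    and gf: "\<And>p. p \<in> U \<Longrightarrow> g (f p) = p" and fg: "\<And>q. q \<in> U' \<Longrightarrow> f (g q) = q"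
    using local_pair_homeo_inverse[OF f] by blast
  have fV: "f ` V \<subseteq> U'" using local_pair_homeo_image[OF f] \<open>V \<subseteq> U\<close> by blast
  have "f ` V = {q \<in> U'. g q \<in> V}"
  proof
    show "f ` V \<subseteq> {q \<in> U'. g q \<in> V}" using fV \<open>V \<subseteq> U\<close> gf by auto
    show "{q \<in> U'. g q \<in> V} \<subseteq> f ` V"
    proof
      fix q assume "q \<in> {q \<in> U'. g q \<in> V}"
      then have "q = f (g q)" "g q \<in> V" using fg by auto
      then show "q \<in> f ` V" by (rule image_eqI)
    qed
  qed
  moreover have "clopenin E {q \<in> U'. g q \<in> V}"
    by (rule clopenin_continuous_map_preimage[OF local_pair_homeo_continuous[OF g]
          local_pair_homeo_clopenin(1)[OF g] \<open>clopenin E V\<close>])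
  ultimately have clopen: "clopenin E (f ` V)" by simp
  have "f ` (topspace (subtopology E U) \<inter> V) = topspace (subtopology E U') \<inter> f ` V"
    using fV \<open>V \<subseteq> U\<close> local_pair_homeo_topspace[OF f] by blast
  then have "homeomorphic_map (subtopology (subtopology E U) V) (subtopology (subtopology E U') (f ` V)) f"
    by (rule homeomorphic_map_subtopologies[OF local_pair_homeo_homeomorphic_map[OF f]])
  moreover have "subtopology (subtopology E U) V = subtopology E V"
    "subtopology (subtopology E U') (f ` V) = subtopology E (f ` V)"
    using fV \<open>V \<subseteq> U\<close> by (simp_all add: subtopology_subtopology Int_absorb1)
  ultimately have "homeomorphic_map (subtopology E V) (subtopology E (f ` V)) f" by simp
  moreover have "f ` (V \<inter> EG) = f ` V \<inter> EG"
  proof -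
    have "\<And>p. p \<in> V \<Longrightarrow> f p \<in> EG \<longleftrightarrow> p \<in> EG"
      using local_pair_homeo_mem_EG_iff[OF f] \<open>V \<subseteq> U\<close> by blast
    then show ?thesis by auto
  qed
  ultimately show ?thesis
    using clopen \<open>clopenin E V\<close> unfolding local_pair_homeo_def by simp
qed

lemma local_pair_homeo_compose:
  assumes "local_pair_homeo E EG U U' f" "local_pair_homeo E EG U' U'' g"
  shows "local_pair_homeo E EG U U'' (g \<circ> f)"
proof -
  have "(g \<circ> f) ` (U \<inter> EG) = g ` f ` (U \<inter> EG)" by (rule image_comp[symmetric])
  then show ?thesis using assms homeomorphic_map_compose unfolding local_pair_homeo_def by auto
qed

lemma local_pair_homeo_id: "clopenin E U \<Longrightarrow> local_pair_homeo E EG U U id"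
  unfolding local_pair_homeo_def by simp

lemma pair_homeo_imp_local_pair_homeo:
  assumes h: "pair_homeo E EG h" and "EG \<subseteq> topspace E" "clopenin E U" "h ` U = U"
  shows "local_pair_homeo E EG U U h"
proof -
  have hom: "homeomorphic_map E E h" and EG: "h ` EG = EG"
    using h unfolding pair_homeo_def by auto
  have U: "U \<subseteq> topspace E" using clopenin_imp_subset[OF \<open>clopenin E U\<close>] .
  then have "homeomorphic_map (subtopology E U) (subtopology E U) h"
    using homeomorphic_map_subtopologies[OF hom] \<open>h ` U = U\<close> by (simp add: Int_absorb1)
  moreover have "h ` (U \<inter> EG) = h ` U \<inter> h ` EG"
    using homeomorphic_imp_injective_map[OF hom] U \<open>EG \<subseteq> topspace E\<close>
    by (intro inj_on_image_Int) auto
  ultimately show ?thesis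
    using EG \<open>h ` U = U\<close> \<open>clopenin E U\<close> unfolding local_pair_homeo_def by simp
qed

lemma pair_homeoI:
  assumes hom: "homeomorphic_map E E h" and "EG \<subseteq> topspace E"
    and EG: "\<And>p. p \<in> topspace E \<Longrightarrow> h p \<in> EG \<longleftrightarrow> p \<in> EG"
  shows "pair_homeo E EG h"
proof -
  have "EG \<subseteq> h ` EG"
  proof
    fix q assume "q \<in> EG"
    then obtain p where "p \<in> topspace E" "q = h p"
      using homeomorphic_imp_surjective_map[OF hom] \<open>EG \<subseteq> topspace E\<close> by blast
    with EG \<open>q \<in> EG\<close> show "q \<in> h ` EG" by blast
  qed
  then show ?thesis
    using hom EG \<open>EG \<subseteq> topspace E\<close> unfolding pair_homeo_def by blast
qed

lemma pair_homeo_id: "pair_homeo E EG id"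
  unfolding pair_homeo_def by simp

lemma pair_homeo_compose:
  assumes "pair_homeo E EG f" "pair_homeo E EG g" shows "pair_homeo E EG (f \<circ> g)"
proof -
  have "(f \<circ> g) ` EG = f ` g ` EG" by (rule image_comp[symmetric])
  then show ?thesis using assms homeomorphic_map_compose unfolding pair_homeo_def by auto
qed

lemma pair_homeo_inverse:
  assumes h: "pair_homeo E EG h" and "EG \<subseteq> topspace E"
  obtains g where "pair_homeo E EG g" "\<And>p. p \<in> topspace E \<Longrightarrow> g (h p) = p"
proof -
  obtain g where g: "homeomorphic_maps E E h g"
    using h unfolding pair_homeo_def homeomorphic_map_maps by auto
  then have gh: "\<And>p. p \<in> topspace E \<Longrightarrow> g (h p) = p"
    unfolding homeomorphic_maps_def by auto
  have "g ` EG = g ` h ` EG" using h unfolding pair_homeo_def by simp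
  also have "\<dots> = EG" by (rule image_image_cancel) (use gh \<open>EG \<subseteq> topspace E\<close> in blast)
  moreover have "homeomorphic_map E E g"
    using g homeomorphic_maps_sym homeomorphic_maps_imp_map by metis
  ultimately have "pair_homeo E EG g" unfolding pair_homeo_def by simp
  with gh that show ?thesis by blast
qed

lemma end_orbit_trans:
  assumes "y \<in> end_orbit E EG z" "w \<in> end_orbit E EG y"
  shows "w \<in> end_orbit E EG z"
proof -
  obtain g h where "pair_homeo E EG g" "y = g z" "pair_homeo E EG h" "w = h y"
    using assms unfolding end_orbit_def by blast
  then have "pair_homeo E EG (h \<circ> g)" "w = (h \<circ> g) z" by (auto simp: pair_homeo_compose)
  then show ?thesis unfolding end_orbit_def by blast
qed

lemma end_orbit_sym:
  assumes "EG \<subseteq> topspace E" "z \<in> topspace E" "y \<in> end_orbit E EG z"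
  shows "z \<in> end_orbit E EG y"
proof -
  obtain h where h: "pair_homeo E EG h" "y = h z" using assms(3) unfolding end_orbit_def by auto
  obtain g where g: "pair_homeo E EG g" "\<And>p. p \<in> topspace E \<Longrightarrow> g (h p) = p"
    using pair_homeo_inverse[OF h(1) assms(1)] by blast
  have "z = g y" using g(2)[OF assms(2)] h(2) by simp
  with g(1) show ?thesis unfolding end_orbit_def by blast
qed

lemma end_orbit_eq:
  assumes "EG \<subseteq> topspace E" "z \<in> topspace E" "y \<in> end_orbit E EG z"
  shows "end_orbit E EG y = end_orbit E EG z"
proof
  show "end_orbit E EG y \<subseteq> end_orbit E EG z"
    using end_orbit_trans[OF assms(3)] by blast
  show "end_orbit E EG z \<subseteq> end_orbit E EG y"
    using end_orbit_trans[OF end_orbit_sym[OF assms]] by blast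
qed

section \<open>Extending local homeomorphisms\<close>

lemma continuous_map_piecewise_clopen:
  assumes R: "clopenin X R" and R': "clopenin X R'" and "R \<inter> R' = {}"
    and f: "continuous_map (subtopology X R) X f" and g: "continuous_map (subtopology X R') X g"
  shows "continuous_map X X (\<lambda>p. if p \<in> R then f p else if p \<in> R' then g p else p)"
    (is "continuous_map X X ?\<sigma>")
proof -
  have "f ` R \<subseteq> topspace X" "g ` R' \<subseteq> topspace X"
    using continuous_map_image_subset_topspace[OF f] continuous_map_image_subset_topspace[OF g]
      clopenin_imp_subset[OF R] clopenin_imp_subset[OF R'] by (simp_all add: Int_absorb1)
  then have "?\<sigma> \<in> topspace X \<rightarrow> topspace X" by (auto simp: image_subset_iff)
  have R'_not_R: "\<And>q. q \<in> R' \<Longrightarrow> q \<notin> R" using \<open>R \<inter> R' = {}\<close> by blast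
  have "topcontinuous_at X X ?\<sigma> p" if "p \<in> topspace X" for p
    unfolding topcontinuous_at_def
  proof (intro conjI allI impI)
    show "p \<in> topspace X" "?\<sigma> \<in> topspace X \<rightarrow> topspace X" by fact+
    fix N assume N: "openin X N \<and> ?\<sigma> p \<in> N"
    consider "p \<in> R" | "p \<in> R'" | "p \<notin> R \<union> R'" by blast
    then show "\<exists>T. openin X T \<and> p \<in> T \<and> (\<forall>q\<in>T. ?\<sigma> q \<in> N)"
    proof cases
      case 1
      let ?T = "{q \<in> R. f q \<in> N}"
      have "openin X ?T"
        using openin_continuous_map_preimage_subtopology[OF f] R N unfolding clopenin_def by blast
      moreover have "p \<in> ?T" "\<forall>q\<in>?T. ?\<sigma> q \<in> N" using 1 N by auto
      ultimately show ?thesis by blast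
    next
      case 2
      let ?T = "{q \<in> R'. g q \<in> N}"
      have "openin X ?T"
        using openin_continuous_map_preimage_subtopology[OF g] R' N unfolding clopenin_def by blast
      moreover have "p \<in> ?T" "\<forall>q\<in>?T. ?\<sigma> q \<in> N" using 2 N R'_not_R by auto
      ultimately show ?thesis by blast
    next
      case 3
      let ?T = "(topspace X - (R \<union> R')) \<inter> N"
      have "closedin X (R \<union> R')" using R R' unfolding clopenin_def by (simp add: closedin_Un)
      then have "openin X ?T" using N by (simp add: openin_diff openin_Int)
      moreover have "p \<in> ?T" "\<forall>q\<in>?T. ?\<sigma> q \<in> N" using 3 N \<open>p \<in> topspace X\<close> by auto
      ultimately show ?thesis by blast
    qed
  qed
  then show ?thesis by (simp add: continuous_map_eq_topcontinuous_at)
qed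

lemma involution_image_eq:
  assumes "\<And>p. \<sigma> (\<sigma> p) = p" "\<And>p. p \<in> S \<Longrightarrow> \<sigma> p \<in> S"
  shows "\<sigma> ` S = S"
proof
  show "S \<subseteq> \<sigma> ` S"
  proof
    fix p assume "p \<in> S"
    then show "p \<in> \<sigma> ` S" using assms by (metis image_eqI)
  qed
qed (use assms(2) in blast)

lemma local_pair_homeo_swap:
  assumes f: "local_pair_homeo E EG U U' f" and "EG \<subseteq> topspace E"
    and R: "clopenin E R" "R \<subseteq> U" and "disjnt R (f ` R)"
  obtains \<sigma> where "pair_homeo E EG \<sigma>" "\<And>p. p \<in> R \<Longrightarrow> \<sigma> p = f p"
    "\<And>S. R \<union> f ` R \<subseteq> S \<Longrightarrow> \<sigma> ` S = S"
proof -
  define R' where "R' = f ` R"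
  obtain g where g: "local_pair_homeo E EG U' U g"
    and gf: "\<And>p. p \<in> U \<Longrightarrow> g (f p) = p" and fg: "\<And>q. q \<in> U' \<Longrightarrow> f (g q) = q"
    using local_pair_homeo_inverse[OF f] by blast
  have f_R: "local_pair_homeo E EG R R' f"
    unfolding R'_def by (rule local_pair_homeo_restrict[OF f R])
  have R': "clopenin E R'" "R' \<subseteq> U'"
    using local_pair_homeo_clopenin(2)[OF f_R] local_pair_homeo_image[OF f] R(2)
    unfolding R'_def by auto
  have "g ` R' = R"
    unfolding R'_def by (rule image_image_cancel) (use gf R(2) in blast)
  then have g_R': "local_pair_homeo E EG R' R g"
    using local_pair_homeo_restrict[OF g R'] by simp
  have disj: "R \<inter> R' = {}" using \<open>disjnt R (f ` R)\<close> unfolding R'_def disjnt_def .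
  define \<sigma> where "\<sigma> p = (if p \<in> R then f p else if p \<in> R' then g p else p)" for p
  have \<sigma>_R: "\<sigma> p = f p" "\<sigma> p \<in> R'" if "p \<in> R" for p
    using that R'_def unfolding \<sigma>_def by auto
  have \<sigma>_R': "\<sigma> p = g p" "\<sigma> p \<in> R" if "p \<in> R'" for p
    using that disj \<open>g ` R' = R\<close> unfolding \<sigma>_def by auto
  have \<sigma>_other: "\<sigma> p = p" if "p \<notin> R \<union> R'" for p
    using that unfolding \<sigma>_def by auto
  have involution: "\<sigma> (\<sigma> p) = p" for p
  proof -
    consider "p \<in> R" | "p \<in> R'" | "p \<notin> R \<union> R'" by blast
    then show ?thesis
    proof cases
      case 1 then show ?thesis using \<sigma>_R \<sigma>_R' gf R(2) by auto
    next
      case 2 then show ?thesis using \<sigma>_R \<sigma>_R' fg R'(2) by auto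
    qed (simp add: \<sigma>_other)
  qed
  have EG_iff: "\<sigma> p \<in> EG \<longleftrightarrow> p \<in> EG" for p
    using local_pair_homeo_mem_EG_iff[OF f_R] local_pair_homeo_mem_EG_iff[OF g_R'] \<sigma>_R \<sigma>_R' \<sigma>_other
    by (cases "p \<in> R \<union> R'") auto
  have "continuous_map E E \<sigma>"
    unfolding \<sigma>_def using R(1) R'(1) disj local_pair_homeo_continuous[OF f_R]
      local_pair_homeo_continuous[OF g_R'] by (rule continuous_map_piecewise_clopen)
  then have "homeomorphic_map E E \<sigma>"
    using homeomorphic_map_involution involution by blast
  then have "pair_homeo E EG \<sigma>"
    by (rule pair_homeoI[OF _ \<open>EG \<subseteq> topspace E\<close>]) (rule EG_iff)
  moreover have "\<sigma> ` S = S" if "R \<union> f ` R \<subseteq> S" for S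
  proof (rule involution_image_eq[OF involution])
    fix p assume "p \<in> S"
    show "\<sigma> p \<in> S"
    proof (cases "p \<in> R \<union> R'")
      case True
      then have "\<sigma> p \<in> R \<union> R'" using \<sigma>_R(2) \<sigma>_R'(2) by blast
      then show ?thesis using \<open>R \<union> f ` R \<subseteq> S\<close> unfolding R'_def by blast
    qed (simp add: \<sigma>_other \<open>p \<in> S\<close>)
  qed
  ultimately show ?thesis using that \<sigma>_R(1) by blast
qed

lemma local_pair_homeo_extend_at:
  assumes "t1_space E" "zero_dimensional E" "EG \<subseteq> topspace E"
    and f: "local_pair_homeo E EG U U' f" and "a \<in> U"
    and S: "clopenin E S" "a \<in> S" "f a \<in> S"
  obtains \<sigma> where "pair_homeo E EG \<sigma>" "\<sigma> a = f a" "\<sigma> ` S = S"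
proof (cases "f a = a")
  case True
  have "pair_homeo E EG id" "id a = f a" "id ` S = S" using True pair_homeo_id by auto
  then show ?thesis by (rule that)
next
  case False
  have "f a \<in> topspace E"
    using \<open>a \<in> U\<close> local_pair_homeo_image[OF f] clopenin_imp_subset[OF local_pair_homeo_clopenin(2)[OF f]]
    by blast
  then have "openin E (topspace E - {f a})"
    using closedin_t1_singleton[OF \<open>t1_space E\<close>] by (simp add: openin_diff)
  moreover have "a \<in> topspace E - {f a}"
    using False \<open>a \<in> U\<close> clopenin_imp_subset[OF local_pair_homeo_clopenin(1)[OF f]] by auto
  ultimately obtain K where K: "clopenin E K" "a \<in> K" "f a \<notin> K"
    using zero_dimensionalD[OF \<open>zero_dimensional E\<close>] by (metis Diff_iff insertCI subsetD)
  \<comment> \<open>\<open>K\<close> separates \<open>a\<close> from \<open>f a\<close>, so \<open>R\<close> is disjoint from its image and can be swapped with it.\<close>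
  define R where "R = K \<inter> S \<inter> {p \<in> U. f p \<in> S - K}"
  have "clopenin E R"
    unfolding R_def
    using clopenin_Int[OF clopenin_Int[OF K(1) S(1)] clopenin_continuous_map_preimage[OF
          local_pair_homeo_continuous[OF f] local_pair_homeo_clopenin(1)[OF f] clopenin_diff[OF S(1) K(1)]]] .
  moreover have "R \<subseteq> U" "a \<in> R" "f ` R \<subseteq> S - K" "R \<subseteq> K \<inter> S"
    using \<open>a \<in> U\<close> K S unfolding R_def by auto
  moreover have "disjnt R (f ` R)" using \<open>f ` R \<subseteq> S - K\<close> \<open>R \<subseteq> K \<inter> S\<close> by (auto simp: disjnt_def)
  ultimately obtain \<sigma> where "pair_homeo E EG \<sigma>" "\<sigma> a = f a" "\<sigma> ` S = S"
    using local_pair_homeo_swap[OF f \<open>EG \<subseteq> topspace E\<close>, of R] by (metis Diff_subset Un_least le_infE subset_trans)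
  then show ?thesis by (rule that)
qed

lemma local_pair_homeo_in_end_orbit:
  assumes "t1_space E" "zero_dimensional E" "EG \<subseteq> topspace E"
    and f: "local_pair_homeo E EG U U' f" and "a \<in> U"
  shows "f a \<in> end_orbit E EG a"
proof -
  have "a \<in> topspace E" "f a \<in> topspace E"
    using \<open>a \<in> U\<close> local_pair_homeo_image[OF f] clopenin_imp_subset[OF local_pair_homeo_clopenin(1)[OF f]]
      clopenin_imp_subset[OF local_pair_homeo_clopenin(2)[OF f]] by blast+
  then obtain \<sigma> where "pair_homeo E EG \<sigma>" "f a = \<sigma> a"
    using local_pair_homeo_extend_at[OF assms clopenin_topspace] by metis
  then show ?thesis unfolding end_orbit_def by blast
qed

section \<open>Gluing nested local homeomorphisms\<close>

definition shrinks_to :: "'a topology \<Rightarrow> (nat \<Rightarrow> 'a set) \<Rightarrow> 'a \<Rightarrow> bool"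
  where "shrinks_to X S c \<longleftrightarrow> (\<forall>N. openin X N \<and> c \<in> N \<longrightarrow> (\<exists>k. S k \<subseteq> N))"

lemma shrinks_to_excludes:
  assumes "t1_space X" "shrinks_to X S c" "p \<in> topspace X" "p \<noteq> c" "c \<in> topspace X"
  obtains n where "p \<notin> S n"
proof -
  have "openin X (topspace X - {p})"
    using closedin_t1_singleton[OF assms(1,3)] by (simp add: openin_diff)
  then obtain n where "S n \<subseteq> topspace X - {p}"
    using assms(2,4,5) unfolding shrinks_to_def by blast
  then show ?thesis using that by blast
qed

lemma shrinks_to_mem_closedin_iff:
  assumes "closedin X A" "shrinks_to X S c" "c \<in> topspace X" "\<And>k. c \<in> S k"
  shows "c \<in> A \<longleftrightarrow> (\<forall>k. S k \<inter> A \<noteq> {})"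
proof
  assume "\<forall>k. S k \<inter> A \<noteq> {}"
  show "c \<in> A"
  proof (rule ccontr)
    assume "c \<notin> A"
    moreover have "openin X (topspace X - A)" using assms(1) by (simp add: openin_diff)
    ultimately obtain k where "S k \<subseteq> topspace X - A"
      using assms(2,3) unfolding shrinks_to_def by blast
    with \<open>\<forall>k. S k \<inter> A \<noteq> {}\<close> show False by blast
  qed
qed (use assms(4) in blast)

(* depth S p is the index k of the annulus S k - S (Suc k) containing p. *)
definition depth :: "(nat \<Rightarrow> 'a set) \<Rightarrow> 'a \<Rightarrow> nat"
  where "depth S p = (LEAST k. p \<notin> S (Suc k))"

lemma mem_decseq_iff_le_depth:
  assumes "decseq S" "p \<in> S 0" "p \<notin> S n"
  shows "p \<in> S k \<longleftrightarrow> k \<le> depth S p"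
proof
  have "\<exists>k. p \<notin> S (Suc k)" using assms(2,3) by (cases n) auto
  then have out: "p \<notin> S (Suc (depth S p))" unfolding depth_def by (rule LeastI_ex)
  assume "p \<in> S k"
  show "k \<le> depth S p"
  proof (rule ccontr)
    assume "\<not> k \<le> depth S p"
    then have "S k \<subseteq> S (Suc (depth S p))" using assms(1) by (simp add: decseq_def)
    with \<open>p \<in> S k\<close> out show False by blast
  qed
next
  assume "k \<le> depth S p"
  show "p \<in> S k"
  proof (cases k)
    case 0 then show ?thesis using assms(2) by simp
  next
    case (Suc j)
    then have "j < depth S p" using \<open>k \<le> depth S p\<close> by simp
    then show ?thesis using not_less_Least[of j "\<lambda>k. p \<notin> S (Suc k)"] Suc unfolding depth_def by blast
  qed
qed

locale nested_local_pair_homeos =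
  fixes E :: "'a topology" and EG :: "'a set" and V W :: "nat \<Rightarrow> 'a set"
    and \<phi> :: "nat \<Rightarrow> 'a \<Rightarrow> 'a" and z y :: 'a
  assumes compact: "compact_space E" and Hausdorff: "Hausdorff_space E" and closed_EG: "closedin E EG"
    and V_0: "V 0 = topspace E" and W_0: "W 0 = topspace E"
    and V_Suc: "\<And>k. V (Suc k) \<subseteq> V k" and W_Suc: "\<And>k. W (Suc k) \<subseteq> W k"
    and homeo: "\<And>k. local_pair_homeo E EG (V k) (W k) (\<phi> k)"
    and image_V_Suc: "\<And>k. \<phi> k ` V (Suc k) = W (Suc k)"
    and z_in_V: "\<And>k. z \<in> V k" and y_in_W: "\<And>k. y \<in> W k"
    and V_shrinks: "shrinks_to E V z" and W_shrinks: "shrinks_to E W y"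
begin

definition glued :: "'a \<Rightarrow> 'a"
  where "glued p = (if p = z then y else \<phi> (depth V p) p)"

lemma decseq_V: "decseq V"
  by (intro decseq_SucI V_Suc)

lemma decseq_W: "decseq W"
  by (intro decseq_SucI W_Suc)

lemma V_subset: "V k \<subseteq> topspace E"
  using V_0 V_Suc by (induction k) auto

lemma V_excludes:
  assumes "p \<in> topspace E" "p \<noteq> z" obtains n where "p \<notin> V n"
  using shrinks_to_excludes[OF Hausdorff_imp_t1_space[OF Hausdorff] V_shrinks assms]
    z_in_V V_0 by blast

lemma W_excludes:
  assumes "q \<in> topspace E" "q \<noteq> y" obtains n where "q \<notin> W n"
  using shrinks_to_excludes[OF Hausdorff_imp_t1_space[OF Hausdorff] W_shrinks assms]
    y_in_W W_0 by blast

lemma mem_V_iff_le_depth: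
  assumes "p \<in> topspace E" "p \<noteq> z"
  shows "p \<in> V k \<longleftrightarrow> k \<le> depth V p"
proof -
  obtain n where "p \<notin> V n" using V_excludes[OF assms] .
  then show ?thesis
    using mem_decseq_iff_le_depth[OF decseq_V] assms(1) V_0 by blast
qed

lemma phi_mem_W_Suc_iff:
  assumes "p \<in> V k" shows "\<phi> k p \<in> W (Suc k) \<longleftrightarrow> p \<in> V (Suc k)"
proof
  assume "\<phi> k p \<in> W (Suc k)"
  then obtain p' where "p' \<in> V (Suc k)" "\<phi> k p = \<phi> k p'" using image_V_Suc by (metis imageE)
  moreover have "p' \<in> V k" using \<open>p' \<in> V (Suc k)\<close> V_Suc by blast
  ultimately show "p \<in> V (Suc k)"
    using inj_onD[OF local_pair_homeo_inj[OF homeo] _ assms] by metis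
qed (use image_V_Suc in blast)

lemma glued_mem_W_iff:
  assumes "p \<in> topspace E"
  shows "glued p \<in> W k \<longleftrightarrow> p \<in> V k"
proof (cases "p = z")
  case False
  define m where "m = depth V p"
  have "p \<in> V m" "p \<notin> V (Suc m)" using mem_V_iff_le_depth[OF assms False] m_def by auto
  then have "glued p \<in> W m" "glued p \<notin> W (Suc m)"
    using False local_pair_homeo_image[OF homeo] phi_mem_W_Suc_iff
    unfolding glued_def m_def[symmetric] by auto
  then show ?thesis
    using mem_V_iff_le_depth[OF assms False, of k] m_def decseq_W
    by (metis decseq_def not_less_eq_eq subsetD)
qed (simp add: glued_def y_in_W z_in_V)

lemma depth_V_eq:
  assumes "p \<in> topspace E" "p \<noteq> z" "p \<in> V m" "p \<notin> V (Suc m)"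
  shows "depth V p = m"
  using mem_V_iff_le_depth[OF assms(1,2), of m] mem_V_iff_le_depth[OF assms(1,2), of "Suc m"] assms(3,4)
  by simp

lemma glued_annulus:
  assumes "p \<in> V m" "p \<notin> V (Suc m)" shows "glued p = \<phi> m p"
proof -
  have "p \<noteq> z" "p \<in> topspace E" using assms z_in_V V_subset by blast+
  then show ?thesis using depth_V_eq assms unfolding glued_def by simp
qed

lemma glued_topspace: "p \<in> topspace E \<Longrightarrow> glued p \<in> topspace E"
  using glued_mem_W_iff[of p 0] V_0 W_0 by simp

lemma inj_on_glued: "inj_on glued (topspace E)"
proof (rule inj_onI)
  fix p q assume p: "p \<in> topspace E" and q: "q \<in> topspace E" and "glued p = glued q"
  then have same: "p \<in> V k \<longleftrightarrow> q \<in> V k" for k by (metis glued_mem_W_iff)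
  show "p = q"
  proof (cases "p = z \<or> q = z")
    case True
    then show ?thesis using same z_in_V V_excludes p q by metis
  next
    case False
    define m where "m = depth V p"
    have "depth V q = m" unfolding m_def depth_def using same by simp
    then have "p \<in> V m" "q \<in> V m" "\<phi> m p = \<phi> m q"
      using mem_V_iff_le_depth p q False \<open>glued p = glued q\<close> unfolding glued_def m_def by auto
    then show ?thesis using local_pair_homeo_inj[OF homeo] by (auto dest: inj_onD)
  qed
qed

lemma glued_image: "glued ` topspace E = topspace E"
proof
  show "glued ` topspace E \<subseteq> topspace E" using glued_topspace by blast
  show "topspace E \<subseteq> glued ` topspace E"
  proof
    fix q assume q: "q \<in> topspace E"
    show "q \<in> glued ` topspace E"
    proof (cases "q = y")
      case True
      then show ?thesis using z_in_V[of 0] V_0 unfolding glued_def by force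
    next
      case False
      define m where "m = depth W q"
      obtain n where "q \<notin> W n" using W_excludes[OF q False] .
      then have "q \<in> W m" "q \<notin> W (Suc m)"
        using mem_decseq_iff_le_depth[OF decseq_W, of q n] q W_0 m_def by auto
      then obtain p where p: "p \<in> V m" "\<phi> m p = q"
        using local_pair_homeo_image[OF homeo] by (metis imageE)
      then have "p \<notin> V (Suc m)" using phi_mem_W_Suc_iff \<open>q \<notin> W (Suc m)\<close> by blast
      then have "glued p = q" using glued_annulus p by simp
      moreover have "p \<in> topspace E" using p(1) V_subset by blast
      ultimately show ?thesis by blast
    qed
  qed
qed

lemma continuous_map_glued: "continuous_map E E glued"
  unfolding continuous_map_eq_topcontinuous_at
proof
  fix p assume p: "p \<in> topspace E"
  show "topcontinuous_at E E glued p"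
    unfolding topcontinuous_at_def
  proof (intro conjI allI impI)
    show "p \<in> topspace E" by fact
    show "glued \<in> topspace E \<rightarrow> topspace E" using glued_topspace by (rule funcsetI)
    fix N assume N: "openin E N \<and> glued p \<in> N"
    show "\<exists>T. openin E T \<and> p \<in> T \<and> (\<forall>q\<in>T. glued q \<in> N)"
    proof (cases "p = z")
      case True
      then obtain k where "W k \<subseteq> N"
        using N W_shrinks unfolding shrinks_to_def glued_def by auto
      moreover have "openin E (V k)"
        using local_pair_homeo_clopenin(1)[OF homeo] unfolding clopenin_def by blast
      moreover have "glued q \<in> W k" if "q \<in> V k" for q
        using glued_mem_W_iff that V_subset by blast
      ultimately show ?thesis using True z_in_V by blast
    next
      case False
      define m where "m = depth V p"
      have p_m: "p \<in> V m" "p \<notin> V (Suc m)" using mem_V_iff_le_depth[OF p False] m_def by auto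
      let ?T = "{q \<in> V m. \<phi> m q \<in> N} - V (Suc m)"
      have "openin E {q \<in> V m. \<phi> m q \<in> N}"
        using openin_continuous_map_preimage_subtopology[OF local_pair_homeo_continuous[OF homeo]]
          local_pair_homeo_clopenin(1)[OF homeo] N unfolding clopenin_def by blast
      moreover have "closedin E (V (Suc m))"
        using local_pair_homeo_clopenin(1)[OF homeo] unfolding clopenin_def by blast
      ultimately have "openin E ?T" by (simp add: openin_diff)
      moreover have "p \<in> ?T" using p_m N glued_annulus[OF p_m] by auto
      moreover have "\<forall>q\<in>?T. glued q \<in> N" using glued_annulus by auto
      ultimately show ?thesis by blast
    qed
  qed
qed

lemma z_mem_EG_iff: "z \<in> EG \<longleftrightarrow> y \<in> EG"
proof -
  have "\<phi> k ` (V k \<inter> EG) = W k \<inter> EG" for k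
    using homeo[of k] unfolding local_pair_homeo_def by blast
  then have "V k \<inter> EG \<noteq> {} \<longleftrightarrow> W k \<inter> EG \<noteq> {}" for k by (metis image_is_empty)
  moreover have "z \<in> topspace E" "y \<in> topspace E" using z_in_V y_in_W V_0 W_0 by auto
  ultimately show ?thesis
    using shrinks_to_mem_closedin_iff[OF closed_EG V_shrinks _ z_in_V]
      shrinks_to_mem_closedin_iff[OF closed_EG W_shrinks _ y_in_W] by simp
qed

lemma glued_mem_EG_iff:
  assumes "p \<in> topspace E" shows "glued p \<in> EG \<longleftrightarrow> p \<in> EG"
proof (cases "p = z")
  case False
  then have "p \<in> V (depth V p)" using mem_V_iff_le_depth[OF assms] by simp
  then show ?thesis using local_pair_homeo_mem_EG_iff[OF homeo] False unfolding glued_def by simp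
qed (simp add: glued_def z_mem_EG_iff)

theorem pair_homeo_glued: "pair_homeo E EG glued"
proof (rule pair_homeoI)
  show "homeomorphic_map E E glued"
    using continuous_imp_homeomorphic_map[OF continuous_map_glued compact Hausdorff glued_image inj_on_glued] .
  show "EG \<subseteq> topspace E" using closed_EG by (rule closedin_subset)
qed (rule glued_mem_EG_iff)

corollary in_end_orbit: "y \<in> end_orbit E EG z"
proof -
  have "y = glued z" unfolding glued_def by simp
  with pair_homeo_glued show ?thesis unfolding end_orbit_def by blast
qed

end

lemma comeager_inI:
  assumes "countable \<D>" "\<And>D. D \<in> \<D> \<Longrightarrow> openin X D \<and> X closure_of D = topspace X" "\<Inter>\<D> \<subseteq> S"
  shows "comeager_in X S"
proof (cases "\<D> = {}")
  case True
  then show ?thesis using assms(3) unfolding comeager_in_def by (intro exI[of _ "\<lambda>_. topspace X"]) auto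
next
  case False
  then have "range (from_nat_into \<D>) = \<D>" using assms(1) by simp
  then show ?thesis
    using assms(2,3) unfolding comeager_in_def by (intro exI[of _ "from_nat_into \<D>"]) auto
qed

lemma comeager_in_Int_nonempty:
  assumes "comeager_in X A" "comeager_in X B"
    and "locally_compact_space X" "regular_space X" "topspace X \<noteq> {}"
  shows "A \<inter> B \<noteq> {}"
proof -
  obtain D :: "nat \<Rightarrow> 'a set"
    where D: "\<And>n. openin X (D n) \<and> X closure_of (D n) = topspace X" "(\<Inter>n. D n) \<subseteq> A"
    using assms(1) unfolding comeager_in_def by blast
  obtain D' :: "nat \<Rightarrow> 'a set"
    where D': "\<And>n. openin X (D' n) \<and> X closure_of (D' n) = topspace X" "(\<Inter>n. D' n) \<subseteq> B"
    using assms(2) unfolding comeager_in_def by blast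
  have dense: "X closure_of \<Inter>(range D \<union> range D') = topspace X"
    by (rule Baire_category) (use assms(3,4) D(1) D'(1) in auto)
  have "\<Inter>(range D \<union> range D') \<noteq> {}"
  proof
    assume "\<Inter>(range D \<union> range D') = {}"
    with dense have "topspace X = X closure_of {}" by (simp only:)
    with assms(5) show False by (simp only: closure_of_empty)
  qed
  then obtain w where "w \<in> \<Inter>(range D \<union> range D')" by blast
  then have "w \<in> (\<Inter>n. D n)" "w \<in> (\<Inter>n. D' n)" by auto
  then have "w \<in> A" "w \<in> B" using subsetD[OF D(2)] subsetD[OF D'(2)] by simp_all
  then show ?thesis by blast
qed

section \<open>Points generic for a dense orbit\<close>

locale end_space =
  fixes E :: "'a topology" and EG :: "'a set"
  assumes compact: "compact_space E" and Hausdorff: "Hausdorff_space E" and closed_EG: "closedin E EG"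
    and zero_dim: "zero_dimensional E" and countable_clopens: "countable {U. clopenin E U}"
begin

lemma EG_subset: "EG \<subseteq> topspace E"
  using closed_EG by (rule closedin_subset)

lemma t1: "t1_space E"
  using Hausdorff by (rule Hausdorff_imp_t1_space)

definition clopen_enum :: "nat \<Rightarrow> 'a set"
  where "clopen_enum = from_nat_into {U. clopenin E U}"

lemma clopenin_clopen_enum: "clopenin E (clopen_enum i)"
  using from_nat_into[of "{U. clopenin E U}"] clopenin_topspace unfolding clopen_enum_def by blast

lemma clopen_enum_surj:
  assumes "clopenin E U" obtains i where "clopen_enum i = U"
  using from_nat_into_surj[OF countable_clopens] assms unfolding clopen_enum_def by blast

definition fine_at :: "nat \<Rightarrow> 'a set \<Rightarrow> bool"
  where "fine_at j S \<longleftrightarrow> (\<forall>i<j. S \<subseteq> clopen_enum i \<or> disjnt S (clopen_enum i))"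

lemma fine_at_subset: "fine_at j S \<Longrightarrow> S' \<subseteq> S \<Longrightarrow> fine_at j S'"
  unfolding fine_at_def disjnt_def by blast

lemma fine_at_clopen_nbhd:
  assumes "p \<in> topspace E" obtains R where "clopenin E R" "p \<in> R" "fine_at j R"
proof -
  have "\<exists>R. clopenin E R \<and> p \<in> R \<and> fine_at j R"
  proof (induction j)
    case 0
    show ?case using assms clopenin_topspace unfolding fine_at_def by blast
  next
    case (Suc j)
    then obtain R where R: "clopenin E R" "p \<in> R" "fine_at j R" by blast
    define K where "K = (if p \<in> clopen_enum j then clopen_enum j else topspace E - clopen_enum j)"
    have "clopenin E K" "p \<in> K"
      unfolding K_def using assms clopenin_clopen_enum clopenin_diff[OF clopenin_topspace] by auto
    moreover have "fine_at (Suc j) (R \<inter> K)"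
      using R(3) unfolding fine_at_def K_def disjnt_def less_Suc_eq by auto
    ultimately show ?case using R clopenin_Int by blast
  qed
  then show ?thesis using that by blast
qed

lemma fine_at_imp_shrinks_to:
  assumes "\<And>k. fine_at (Suc k) (S (Suc k))" "\<And>k. c \<in> S k"
  shows "shrinks_to E S c"
  unfolding shrinks_to_def
proof (intro allI impI, elim conjE)
  fix N assume "openin E N" "c \<in> N"
  then obtain U where U: "clopenin E U" "c \<in> U" "U \<subseteq> N" using zero_dimensionalD[OF zero_dim] by blast
  then obtain i where "clopen_enum i = U" using clopen_enum_surj by blast
  then have "S (Suc i) \<subseteq> U" using assms U(2) unfolding fine_at_def disjnt_def by blast
  then show "\<exists>k. S k \<subseteq> N" using U(3) by blast
qed

definition admissible :: "'a \<Rightarrow> 'a set \<Rightarrow> 'a set \<Rightarrow> bool"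
  where "admissible z V W \<longleftrightarrow> z \<in> V \<and> (\<exists>\<phi>. local_pair_homeo E EG V W \<phi>)"

definition fine_subpair :: "'a \<Rightarrow> nat \<Rightarrow> 'a set \<Rightarrow> 'a set \<Rightarrow> 'a set \<Rightarrow> 'a set \<Rightarrow> bool"
  where "fine_subpair z j V W V' W' \<longleftrightarrow> z \<in> V' \<and> clopenin E V' \<and> V' \<subseteq> V \<and> fine_at j V' \<and> fine_at j W' \<and>
    (\<exists>\<phi>. local_pair_homeo E EG V W \<phi> \<and> \<phi> ` V' = W')"

(* The points y for which the stage (V, W) of the construction of a homeomorphism sending z
   to y can be refined to level j; the points outside W impose no condition. *)
definition refinable :: "'a \<Rightarrow> nat \<Rightarrow> 'a set \<Rightarrow> 'a set \<Rightarrow> 'a set"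
  where "refinable z j V W = (topspace E - W) \<union> \<Union>{W'. \<exists>V'. fine_subpair z j V W V' W'}"

lemma fine_subpair_homeo:
  assumes "fine_subpair z j V W V' W'" "local_pair_homeo E EG V W \<phi>" "\<phi> ` V' = W'"
  shows "local_pair_homeo E EG V' W' \<phi>"
proof -
  have "clopenin E V'" "V' \<subseteq> V" using assms(1) unfolding fine_subpair_def by auto
  from local_pair_homeo_restrict[OF assms(2) this] show ?thesis using assms(3) by simp
qed

lemma fine_subpair_admissible:
  assumes "fine_subpair z j V W V' W'" shows "admissible z V' W'"
proof -
  obtain \<phi> where "local_pair_homeo E EG V W \<phi>" "\<phi> ` V' = W'" "z \<in> V'"
    using assms unfolding fine_subpair_def by blast
  then show ?thesis using fine_subpair_homeo[OF assms] unfolding admissible_def by blast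
qed

lemma openin_refinable:
  assumes "admissible z V W" shows "openin E (refinable z j V W)"
proof -
  have "clopenin E W" using assms local_pair_homeo_clopenin(2) unfolding admissible_def by blast
  moreover have "clopenin E W'" if "fine_subpair z j V W V' W'" for V' W'
    using that fine_subpair_homeo local_pair_homeo_clopenin(2) unfolding fine_subpair_def by blast
  ultimately show ?thesis
    unfolding refinable_def clopenin_def by (intro openin_Un openin_diff openin_Union) auto
qed

lemma local_pair_homeo_through_orbit:
  assumes \<theta>: "local_pair_homeo E EG V W \<theta>" and "z \<in> V" "q \<in> W" "q \<in> end_orbit E EG z"
  obtains \<phi> where "local_pair_homeo E EG V W \<phi>" "\<phi> z = q"
proof -
  have V: "V \<subseteq> topspace E" "clopenin E V" using local_pair_homeo_clopenin(1)[OF \<theta>] clopenin_imp_subset by auto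
  obtain q' where q': "q' \<in> V" "\<theta> q' = q" using local_pair_homeo_image[OF \<theta>] \<open>q \<in> W\<close> by blast
  have "q \<in> end_orbit E EG q'"
    using local_pair_homeo_in_end_orbit[OF t1 zero_dim EG_subset \<theta> q'(1)] q'(2) by simp
  then have "q' \<in> end_orbit E EG q"
    using end_orbit_sym[OF EG_subset] q'(1) V(1) by blast
  with \<open>q \<in> end_orbit E EG z\<close> have "q' \<in> end_orbit E EG z" by (rule end_orbit_trans)
  then obtain g where g: "pair_homeo E EG g" "g z = q'" unfolding end_orbit_def by auto
  then have "local_pair_homeo E EG (topspace E) (topspace E) g"
    using pair_homeo_imp_local_pair_homeo[OF g(1) EG_subset clopenin_topspace]
      homeomorphic_imp_surjective_map unfolding pair_homeo_def by blast
  then obtain \<sigma> where \<sigma>: "pair_homeo E EG \<sigma>" "\<sigma> z = q'" "\<sigma> ` V = V"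
    using local_pair_homeo_extend_at[OF t1 zero_dim EG_subset _ _ V(2) \<open>z \<in> V\<close>] g(2) q'(1) V(1) \<open>z \<in> V\<close>
    by (metis subsetD)
  have "local_pair_homeo E EG V W (\<theta> \<circ> \<sigma>)"
    using local_pair_homeo_compose[OF pair_homeo_imp_local_pair_homeo[OF \<sigma>(1) EG_subset V(2) \<sigma>(3)] \<theta>] .
  moreover have "(\<theta> \<circ> \<sigma>) z = q" using \<sigma>(2) q'(2) by simp
  ultimately show ?thesis by (rule that)
qed

lemma fine_subpair_exists:
  assumes \<phi>: "local_pair_homeo E EG V W \<phi>" and "z \<in> V" "openin E N" "\<phi> z \<in> N"
  obtains V' where "fine_subpair z j V W V' (\<phi> ` V')" "\<phi> z \<in> \<phi> ` V'" "\<phi> ` V' \<subseteq> N"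
proof -
  have "z \<in> topspace E" "\<phi> z \<in> topspace E"
    using \<open>z \<in> V\<close> local_pair_homeo_image[OF \<phi>] local_pair_homeo_clopenin[OF \<phi>] clopenin_imp_subset
    by blast+
  then obtain Rz Rq Nq where Rz: "clopenin E Rz" "z \<in> Rz" "fine_at j Rz"
    and Rq: "clopenin E Rq" "\<phi> z \<in> Rq" "fine_at j Rq" and Nq: "clopenin E Nq" "\<phi> z \<in> Nq" "Nq \<subseteq> N"
    using fine_at_clopen_nbhd zero_dimensionalD[OF zero_dim \<open>openin E N\<close> \<open>\<phi> z \<in> N\<close>] by metis
  define V' where "V' = Rz \<inter> {p \<in> V. \<phi> p \<in> Rq \<inter> Nq}"
  have "clopenin E V'"
    unfolding V'_def using clopenin_Int[OF Rz(1) clopenin_continuous_map_preimage[OF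
          local_pair_homeo_continuous[OF \<phi>] local_pair_homeo_clopenin(1)[OF \<phi>] clopenin_Int[OF Rq(1) Nq(1)]]] .
  moreover have "z \<in> V'" "V' \<subseteq> V" "V' \<subseteq> Rz" "\<phi> ` V' \<subseteq> Rq" "\<phi> ` V' \<subseteq> N"
    using \<open>z \<in> V\<close> Rz Rq Nq unfolding V'_def by auto
  moreover have "fine_at j V'" "fine_at j (\<phi> ` V')"
    using fine_at_subset[OF Rz(3) \<open>V' \<subseteq> Rz\<close>] fine_at_subset[OF Rq(3) \<open>\<phi> ` V' \<subseteq> Rq\<close>] .
  ultimately have "fine_subpair z j V W V' (\<phi> ` V')"
    unfolding fine_subpair_def using \<phi> by blast
  then show ?thesis by (rule that[OF _ imageI[OF \<open>z \<in> V'\<close>] \<open>\<phi> ` V' \<subseteq> N\<close>])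
qed

lemma refinable_dense:
  assumes "admissible z V W" "C \<subseteq> E closure_of (end_orbit E EG z \<inter> C)"
  shows "C \<subseteq> E closure_of (C \<inter> refinable z j V W)"
proof
  fix p assume "p \<in> C"
  then have p: "p \<in> topspace E"
    using assms(2) closure_of_subset_topspace[of E "end_orbit E EG z \<inter> C"] by blast
  obtain \<theta> where \<theta>: "local_pair_homeo E EG V W \<theta>" and "z \<in> V" using assms(1) unfolding admissible_def by blast
  have "\<exists>q. q \<in> C \<inter> refinable z j V W \<and> q \<in> N" if N: "p \<in> N" "openin E N" for N
  proof (cases "p \<in> W")
    case False
    then show ?thesis using \<open>p \<in> C\<close> p N(1) unfolding refinable_def by blast
  next
    case True
    have "openin E (N \<inter> W)"
      using N(2) local_pair_homeo_clopenin(2)[OF \<theta>] unfolding clopenin_def by blast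
    moreover have "p \<in> E closure_of (end_orbit E EG z \<inter> C)" using assms(2) \<open>p \<in> C\<close> by blast
    ultimately obtain q where q: "q \<in> end_orbit E EG z" "q \<in> C" "q \<in> N" "q \<in> W"
      using True N(1) unfolding in_closure_of by blast
    obtain \<phi> where \<phi>: "local_pair_homeo E EG V W \<phi>" "\<phi> z = q"
      using local_pair_homeo_through_orbit[OF \<theta> \<open>z \<in> V\<close> q(4,1)] .
    then obtain V' where "fine_subpair z j V W V' (\<phi> ` V')" "q \<in> \<phi> ` V'" "\<phi> ` V' \<subseteq> N"
      using fine_subpair_exists[OF \<phi>(1) \<open>z \<in> V\<close> \<open>openin E N\<close>] q(3) by metis
    then show ?thesis using q(2) unfolding refinable_def by blast
  qed
  then show "p \<in> E closure_of (C \<inter> refinable z j V W)" using p unfolding in_closure_of by blast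
qed


lemma refining_sequence_exists:
  assumes "z \<in> topspace E" "y \<in> topspace E"
    and generic: "\<And>V W j. admissible z V W \<Longrightarrow> y \<in> refinable z j V W"
  obtains V W where "V 0 = topspace E" "W 0 = topspace E" "\<And>k. z \<in> V k" "\<And>k. y \<in> W k"
    "\<And>k. fine_subpair z (Suc k) (V k) (W k) (V (Suc k)) (W (Suc k))"
proof -
  define P where "P n VW \<longleftrightarrow> admissible z (fst VW) (snd VW) \<and> y \<in> snd VW \<and>
    (n = 0 \<longrightarrow> VW = (topspace E, topspace E))" for n :: nat and VW :: "'a set \<times> 'a set"
  define Q where "Q n VW VW' \<longleftrightarrow> fine_subpair z (Suc n) (fst VW) (snd VW) (fst VW') (snd VW')"
    for n :: nat and VW VW' :: "'a set \<times> 'a set"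
  have "P 0 (topspace E, topspace E)"
    using assms(1,2) local_pair_homeo_id[OF clopenin_topspace] unfolding P_def admissible_def by auto
  moreover have "\<exists>VW'. P (Suc n) VW' \<and> Q n VW VW'" if "P n VW" for n VW
  proof -
    have "y \<in> \<Union>{W'. \<exists>V'. fine_subpair z (Suc n) (fst VW) (snd VW) V' W'}"
      using generic[of "fst VW" "snd VW" "Suc n"] that unfolding P_def refinable_def by blast
    then obtain V' W' where "fine_subpair z (Suc n) (fst VW) (snd VW) V' W'" "y \<in> W'" by blast
    then show ?thesis
      using fine_subpair_admissible unfolding P_def Q_def by (intro exI[of _ "(V', W')"]) auto
  qed
  ultimately obtain VW where VW: "\<And>n. P n (VW n)" "\<And>n. Q n (VW n) (VW (Suc n))"
    using dependent_nat_choice[of P Q] by blast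
  show ?thesis
  proof (rule that[of "\<lambda>n. fst (VW n)" "\<lambda>n. snd (VW n)"])
    show "fst (VW 0) = topspace E" "snd (VW 0) = topspace E" using VW(1)[of 0] unfolding P_def by auto
    show "z \<in> fst (VW k)" "y \<in> snd (VW k)" for k
      using VW(1)[of k] unfolding P_def admissible_def by auto
    show "fine_subpair z (Suc k) (fst (VW k)) (snd (VW k)) (fst (VW (Suc k))) (snd (VW (Suc k)))" for k
      using VW(2) unfolding Q_def .
  qed
qed

lemma generic_in_end_orbit:
  assumes "z \<in> topspace E" "y \<in> topspace E"
    and "\<And>V W j. admissible z V W \<Longrightarrow> y \<in> refinable z j V W"
  shows "y \<in> end_orbit E EG z"
proof -
  obtain V W where V_0: "V 0 = topspace E" and W_0: "W 0 = topspace E"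
    and z_in_V: "\<And>k. z \<in> V k" and y_in_W: "\<And>k. y \<in> W k"
    and step: "\<And>k. fine_subpair z (Suc k) (V k) (W k) (V (Suc k)) (W (Suc k))"
    using refining_sequence_exists[OF assms] by blast
  have "\<forall>k. \<exists>f. local_pair_homeo E EG (V k) (W k) f \<and> f ` V (Suc k) = W (Suc k)"
    using step unfolding fine_subpair_def by blast
  then obtain \<phi> where \<phi>: "\<And>k. local_pair_homeo E EG (V k) (W k) (\<phi> k)"
    "\<And>k. \<phi> k ` V (Suc k) = W (Suc k)"
    by metis
  interpret nested_local_pair_homeos E EG V W \<phi> z y
  proof
    show "V (Suc k) \<subseteq> V k" for k using step unfolding fine_subpair_def by blast
    show "W (Suc k) \<subseteq> W k" for k
      using step[of k] \<phi>(2)[of k] local_pair_homeo_image[OF \<phi>(1)] unfolding fine_subpair_def by blast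
    show "shrinks_to E V z"
      using step z_in_V unfolding fine_subpair_def by (intro fine_at_imp_shrinks_to) auto
    show "shrinks_to E W y"
      using step y_in_W unfolding fine_subpair_def by (intro fine_at_imp_shrinks_to) auto
  qed (use compact Hausdorff closed_EG V_0 W_0 \<phi> z_in_V y_in_W in auto)
  show ?thesis by (rule in_end_orbit)
qed

theorem comeager_end_orbit:
  assumes "C \<subseteq> topspace E" "z \<in> topspace E" "C \<subseteq> E closure_of (end_orbit E EG z \<inter> C)"
  shows "comeager_in (subtopology E C) (end_orbit E EG z)"
proof (rule comeager_inI)
  let ?\<D> = "(\<lambda>(V, W, j). C \<inter> refinable z j V W) ` {(V, W, j). admissible z V W}"
  have "{(V, W, j). admissible z V W} \<subseteq> {U. clopenin E U} \<times> {U. clopenin E U} \<times> (UNIV :: nat set)"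
    unfolding admissible_def using local_pair_homeo_clopenin by blast
  moreover have "countable ({U. clopenin E U} \<times> {U. clopenin E U} \<times> (UNIV :: nat set))"
    using countable_clopens by (intro countable_SIGMA countableI_type)
  ultimately show "countable ?\<D>" by (rule countable_image[OF countable_subset])
  show "openin (subtopology E C) D \<and> subtopology E C closure_of D = topspace (subtopology E C)"
    if D: "D \<in> ?\<D>" for D
  proof -
    obtain V W j where "admissible z V W" "D = C \<inter> refinable z j V W" using D by auto
    then show ?thesis
      using openin_refinable refinable_dense[OF _ assms(3)] assms(1)
      by (simp add: openin_subtopology_Int2 closure_of_subtopology Int_absorb1 Int_absorb2)
  qed
  show "\<Inter>?\<D> \<subseteq> end_orbit E EG z"
  proof
    fix y assume y: "y \<in> \<Inter>?\<D>"
    have "admissible z (topspace E) (topspace E)"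
      using assms(2) local_pair_homeo_id[OF clopenin_topspace] unfolding admissible_def by blast
    then have "y \<in> topspace E" using y assms(1) by blast
    moreover have "y \<in> refinable z j V W" if "admissible z V W" for V W j
      using y that by blast
    ultimately show "y \<in> end_orbit E EG z" using generic_in_end_orbit[OF assms(2)] by blast
  qed
qed

lemma comeager_end_orbits_eq:
  assumes "closedin E C" "z \<in> C" "z' \<in> C"
    and "comeager_in (subtopology E C) (end_orbit E EG z)"
    and "comeager_in (subtopology E C) (end_orbit E EG z')"
  shows "end_orbit E EG z = end_orbit E EG z'"
proof -
  have "compact_space (subtopology E C)"
    using assms(1) compact by (simp add: closedin_compact_space compact_space_subtopology)
  moreover have "Hausdorff_space (subtopology E C)" using Hausdorff by (rule Hausdorff_space_subtopology)
  ultimately have "locally_compact_space (subtopology E C)" "regular_space (subtopology E C)"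
    by (auto intro: compact_imp_locally_compact_space compact_Hausdorff_imp_regular_space)
  moreover have "topspace (subtopology E C) \<noteq> {}"
    using assms(1,2) closedin_subset by fastforce
  ultimately obtain w where w: "w \<in> end_orbit E EG z" "w \<in> end_orbit E EG z'"
    using comeager_in_Int_nonempty[OF assms(4,5)] by blast
  have "z \<in> topspace E" "z' \<in> topspace E" using assms(1,2,3) closedin_subset by blast+
  then have "end_orbit E EG w = end_orbit E EG z" "end_orbit E EG w = end_orbit E EG z'"
    using end_orbit_eq[OF EG_subset] w by blast+
  then show ?thesis by simp
qed

end



lemma end_space_pair_imp_end_space:
  assumes "end_space_pair E EG" shows "end_space E EG"
proof -
  have "compact_space E" "metrizable_space E" "closedin E EG"
    and "\<And>p. p \<in> topspace E \<Longrightarrow> connected_component_of_set E p = {p}"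
    using assms unfolding end_space_pair_def by auto
  moreover have "Hausdorff_space E" using \<open>metrizable_space E\<close> by (rule metrizable_imp_Hausdorff_space)
  ultimately show ?thesis
    by unfold_locales (auto intro: compact_totally_disconnected_imp_zero_dimensional
        countable_clopenin compact_metrizable_imp_second_countable)
qed

theorem mainTheorem3:
  fixes E :: "'a topology" and EG :: "'a set" and x :: 'a
  assumes "end_space_pair E EG"
    and "x \<in> topspace E"
    and "C = E closure_of (H_set E EG x)"
    and "\<forall>y\<in>C. y \<in> E closure_of (C - {y})"
  shows "(\<forall>z\<in>C. (subtopology E C) closure_of (end_orbit E EG z) = C
             \<longrightarrow> comeager_in (subtopology E C) (end_orbit E EG z))
         \<and> (\<forall>z\<in>C. \<forall>z'\<in>C. (subtopology E C) closure_of (end_orbit E EG z) = C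
             \<and> (subtopology E C) closure_of (end_orbit E EG z') = C
             \<longrightarrow> end_orbit E EG z = end_orbit E EG z')"
proof -
  interpret end_space E EG using assms(1) by (rule end_space_pair_imp_end_space)
  have C: "C \<subseteq> topspace E" "closedin E C"
    unfolding assms(3) by (rule closure_of_subset_topspace, rule closedin_closure_of)
  have comeager: "comeager_in (subtopology E C) (end_orbit E EG z)"
    if "z \<in> C" "(subtopology E C) closure_of (end_orbit E EG z) = C" for z
    using comeager_end_orbit[OF C(1)] that C(1) by (auto simp: closure_of_subtopology Int_commute)
  moreover have "end_orbit E EG z = end_orbit E EG z'"
    if "z \<in> C" "z' \<in> C" "(subtopology E C) closure_of (end_orbit E EG z) = C"
      "(subtopology E C) closure_of (end_orbit E EG z') = C" for z z'
    using comeager_end_orbits_eq[OF C(2) that(1,2) comeager[OF that(1,3)] comeager[OF that(2,4)]] .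
  ultimately show ?thesis by blast
qed

end
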